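(* Let $K$ be a field of characteristic $0$, let $L=\mathcal{L}(x,y)$ be the free Lie algebra over $K$ freely generated by $x,y$, let $\delta$ be the derivation of $L$ with $\delta(x)=0$, $\delta(y)=x$, and $L^\delta=\ker\delta$. Let $f\neq 0$ be a multihomogeneous element of $L$ with $\deg_y(f)=3$ and $\deg(f)=n$. Then $f\in L^\delta$ if and only if $f$ belongs to the Lie subalgebra of $L$ generated by $x$, $[y,x]$ and the elements $$[y, \underbrace{x, \ldots, x}_k, [y, \underbrace{x, \ldots, x}_{n-3-k}, y]] - [y,\underbrace{x, \ldots, x}_{k-1}, y, [y, \underbrace{x, \ldots, x}_{n-2-k}]]$$ for integers $k$ with $\frac{n-2}{2}\leq k\leq n-4$.
   Context: Brackets are left-normed: $[a_1,a_2,\ldots,a_n]=[[\ldots[a_1,a_2],\ldots],a_n]$, and an inner bracket denotes a left-normed element inserted as a single argument. *)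

theory Defs
  imports Main
begin

datatype gen = X | Y

text \<open>Elements of the (completed) free associative algebra K<<x,y>>: coefficient
  functions on words. The free Lie algebra L(x,y) is realised (Witt) as the Lie
  subalgebra generated by x and y under the commutator bracket.\<close>
type_synonym 'k ncs = "gen list \<Rightarrow> 'k"

definition ncmul :: "'k::comm_ring_1 ncs \<Rightarrow> 'k ncs \<Rightarrow> 'k ncs" where
  "ncmul p q = (\<lambda>w. \<Sum>i\<le>length w. p (take i w) * q (drop i w))"

definition lie_br :: "'k::comm_ring_1 ncs \<Rightarrow> 'k ncs \<Rightarrow> 'k ncs" where
  "lie_br a b = (\<lambda>w. ncmul a b w - ncmul b a w)"

definition gen_el :: "gen \<Rightarrow> 'k::comm_ring_1 ncs" where
  "gen_el g = (\<lambda>w. if w = [g] then 1 else 0)"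

abbreviation xel :: "'k::comm_ring_1 ncs" where "xel \<equiv> gen_el X"
abbreviation yel :: "'k::comm_ring_1 ncs" where "yel \<equiv> gen_el Y"

inductive lie_gen :: "'k::comm_ring_1 ncs set \<Rightarrow> 'k ncs \<Rightarrow> bool" for S where
  base: "s \<in> S \<Longrightarrow> lie_gen S s"
| zero: "lie_gen S (\<lambda>w. 0)"
| add: "lie_gen S a \<Longrightarrow> lie_gen S b \<Longrightarrow> lie_gen S (\<lambda>w. a w + b w)"
| smult: "lie_gen S a \<Longrightarrow> lie_gen S (\<lambda>w. c * a w)"
| br: "lie_gen S a \<Longrightarrow> lie_gen S b \<Longrightarrow> lie_gen S (lie_br a b)"

definition free_lie :: "'k::comm_ring_1 ncs set" where
  "free_lie = {f. lie_gen {xel, yel} f}"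

text \<open>The derivation with x \<mapsto> 0, y \<mapsto> x, extended to the associative algebra:
  coefficient of w in delta p is the sum of coefficients of p at the words obtained
  from w by turning one letter X into Y.\<close>
definition delta :: "'k::comm_ring_1 ncs \<Rightarrow> 'k ncs" where
  "delta p = (\<lambda>w. \<Sum>i\<in>{i. i < length w \<and> w ! i = X}. p (w[i := Y]))"

definition cnt :: "gen \<Rightarrow> gen list \<Rightarrow> nat" where
  "cnt g w = length (filter (\<lambda>c. c = g) w)"

definition multihom :: "'k::zero ncs \<Rightarrow> bool" where
  "multihom f \<longleftrightarrow> (\<exists>a b. \<forall>w. f w \<noteq> 0 \<longrightarrow> cnt X w = a \<and> cnt Y w = b)"

definition deg_y_is :: "'k::zero ncs \<Rightarrow> nat \<Rightarrow> bool" where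
  "deg_y_is f d \<longleftrightarrow> (\<forall>w. f w \<noteq> 0 \<longrightarrow> cnt Y w = d)"

definition deg_is :: "'k::zero ncs \<Rightarrow> nat \<Rightarrow> bool" where
  "deg_is f d \<longleftrightarrow> (\<forall>w. f w \<noteq> 0 \<longrightarrow> length w = d)"

definition lnb :: "'k::comm_ring_1 ncs \<Rightarrow> 'k ncs list \<Rightarrow> 'k ncs" where
  "lnb a bs = foldl lie_br a bs"

definition wel :: "nat \<Rightarrow> nat \<Rightarrow> 'k::comm_ring_1 ncs" where
  "wel n k = (\<lambda>w.
     lnb yel (replicate k xel @ [lnb yel (replicate (n-3-k) xel @ [yel])]) w
   - lnb yel (replicate (k-1) xel @ [yel, lnb yel (replicate (n-2-k) xel)]) w)"

definition gens_cor :: "nat \<Rightarrow> 'k::comm_ring_1 ncs set" where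
  "gens_cor n = {xel, lie_br yel xel} \<union>
     {wel n k | k. int n - 2 \<le> 2 * int k \<and> k + 4 \<le> n}"

end

theory Submission
  imports Defs "HOL-Library.Function_Algebras" HOL.Modules
begin

text \<open>
  Write \<open>ys i\<close> for the left-normed bracket [y, x, ..., x] with i letters x. Induction over
  the generation of L shows that the part of L of y-degree d is spanned by x (for d = 0) or by the
  left-normed brackets of d elements \<open>ys i\<close>: bracketing with x or with some \<open>ys k\<close> preserves
  these spans by the Jacobi identity. Hence an element of y-degree 3 and degree m + 3 is a
  combination of the brackets \<open>br3 i j k\<close> = [[ys i, ys j], ys k] with i + j + k = m.

  Since delta kills \<open>ys i\<close> for i > 0 and maps y to x, the \<open>br3 i j k\<close> with i, j, k > 0 lie in the
  kernel and in the subalgebra generated by x and [y, x]. Antisymmetry and Jacobi express the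
  remaining ones through \<open>br3y m j\<close> = [[y, ys j], ys (m - j)]. The generators of the statement are
  \<open>wel (m + 3) k = br3y m (m - k) + br3y m (k - 1)\<close>, so modulo them only the \<open>br3y m j\<close> with
  m \<le> 2 j remain, and their images under delta are linearly independent: evaluated at the words
  Y X^a Y X^(m + 1 - a) they form a triangular system. So an element of the kernel has no
  component along them.
\<close>

section \<open>Noncommutative series as a module\<close>

definition ncscale :: "'k::comm_ring_1 \<Rightarrow> 'k ncs \<Rightarrow> 'k ncs" where
  "ncscale c a = (\<lambda>w. c * a w)"

text \<open>Not a simp rule: the simplifier would eta-expand \<open>ncscale\<close> inside \<open>nc.span\<close>.\<close>

lemma ncscale_apply: "ncscale c a w = c * a w"
  by (simp add: ncscale_def)

interpretation nc: module "ncscale :: 'k::comm_ring_1 \<Rightarrow> 'k ncs \<Rightarrow> 'k ncs"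
  by unfold_locales (simp_all add: ncscale_def fun_eq_iff algebra_simps)

lemma ncs_pointwise_eqs:
  "(\<lambda>w. 0) = (0 :: 'k::comm_ring_1 ncs)"
  "(\<lambda>w. a w + b w) = a + b"
  "(\<lambda>w. c * a w) = ncscale c a"
  by (simp_all add: fun_eq_iff ncscale_apply)

abbreviation nc_linear :: "('k::comm_ring_1 ncs \<Rightarrow> 'k ncs) \<Rightarrow> bool" where
  "nc_linear \<equiv> module_hom ncscale ncscale"

lemma nc_linearI:
  assumes "\<And>a b. \<phi> (a + b) = \<phi> a + \<phi> b" and "\<And>c a. \<phi> (ncscale c a) = ncscale c (\<phi> a)"
  shows "nc_linear \<phi>"
  by (simp add: module_hom_def module_hom_axioms_def nc.module_axioms assms)

lemma nc_linear_span_into: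
  assumes "nc_linear \<phi>" and "x \<in> nc.span A" and "\<And>a. a \<in> A \<Longrightarrow> \<phi> a \<in> nc.span B"
  shows "\<phi> x \<in> nc.span B"
proof -
  have "nc.subspace {x. \<phi> x \<in> nc.span B}"
    by (rule module_hom.subspace_linear_preimage[OF assms(1) nc.subspace_span])
  then show ?thesis
    using nc.span_subspace_induct[OF assms(2)] assms(3) by blast
qed

lemma sum_fun_apply: "(\<Sum>i\<in>I. f i) x = (\<Sum>i\<in>I. f i x)"
  by (induction I rule: infinite_finite_induct) auto

lemma (in module) span_image_finite:
  assumes "finite I" and "h \<in> span (F ` I)"
  shows "\<exists>c. h = (\<Sum>i\<in>I. c i *s F i)"
  using assms(2)
proof (induction rule: span_induct_alt)
  case base
  show ?case by (auto intro: exI[of _ "\<lambda>_. 0"])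
next
  case (step c x y)
  then obtain d i0 where y: "y = (\<Sum>i\<in>I. d i *s F i)" and i0: "i0 \<in> I" "x = F i0" by blast
  have "(\<Sum>i\<in>I. (if i = i0 then c else 0) *s F i) = (\<Sum>i\<in>I. if i = i0 then c *s F i else 0)"
    by (rule sum.cong) auto
  then have "c *s x + y = (\<Sum>i\<in>I. (d i + (if i = i0 then c else 0)) *s F i)"
    using assms(1) i0 by (simp add: y scale_left_distrib sum.distrib)
  then show ?case by (intro exI[of _ "\<lambda>i. d i + (if i = i0 then c else 0)"])
qed

section \<open>The product, the bracket and the derivation\<close>

lemma ncmul_Nil [simp]: "ncmul p q [] = p [] * q []"
  by (simp add: ncmul_def)

lemma ncmul_Cons: "ncmul p q (a # w) = p [] * q (a # w) + ncmul (\<lambda>u. p (a # u)) q w"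
  unfolding ncmul_def length_Cons sum.atMost_Suc_shift by simp

lemma ncmul_add_left [simp]: "ncmul (a + b) c = ncmul a c + ncmul b c"
  by (simp add: ncmul_def fun_eq_iff sum.distrib algebra_simps)

lemma ncmul_add_right [simp]: "ncmul a (b + c) = ncmul a b + ncmul a c"
  by (simp add: ncmul_def fun_eq_iff sum.distrib algebra_simps)

lemma ncmul_scale_left [simp]: "ncmul (ncscale r a) b = ncscale r (ncmul a b)"
  by (simp add: ncmul_def fun_eq_iff sum_distrib_left ncscale_apply algebra_simps)

lemma ncmul_scale_right [simp]: "ncmul a (ncscale r b) = ncscale r (ncmul a b)"
  by (simp add: ncmul_def fun_eq_iff sum_distrib_left ncscale_apply algebra_simps)

lemma nc_linear_ncmul_left: "nc_linear (\<lambda>a. ncmul a b)"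
  and nc_linear_ncmul_right: "nc_linear (ncmul a)"
  by (simp_all add: nc_linearI)

lemma ncmul_minus_left [simp]: "ncmul (- a) b = - ncmul a b"
  and ncmul_diff_left [simp]: "ncmul (a - b) c = ncmul a c - ncmul b c"
  and ncmul_zero_left [simp]: "ncmul 0 b = 0"
  using module_hom.neg[OF nc_linear_ncmul_left] module_hom.diff[OF nc_linear_ncmul_left]
    module_hom.zero[OF nc_linear_ncmul_left] by blast+

lemma ncmul_minus_right [simp]: "ncmul a (- b) = - ncmul a b"
  and ncmul_diff_right [simp]: "ncmul a (b - c) = ncmul a b - ncmul a c"
  and ncmul_zero_right [simp]: "ncmul a 0 = 0"
  using module_hom.neg[OF nc_linear_ncmul_right] module_hom.diff[OF nc_linear_ncmul_right]
    module_hom.zero[OF nc_linear_ncmul_right] by blast+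

lemma ncmul_Cons_left:
  "(\<lambda>u. ncmul p q (a # u)) = ncscale (p []) (\<lambda>u. q (a # u)) + ncmul (\<lambda>u. p (a # u)) q"
  by (simp add: fun_eq_iff ncmul_Cons ncscale_apply)

lemma ncmul_assoc: "ncmul (ncmul p q) r = ncmul p (ncmul q r)"
proof (rule ext)
  show "ncmul (ncmul p q) r w = ncmul p (ncmul q r) w" for w
  proof (induction w arbitrary: p)
    case (Cons a w)
    have "ncmul (ncmul p q) r (a # w) = p [] * q [] * r (a # w)
        + p [] * ncmul (\<lambda>u. q (a # u)) r w + ncmul (\<lambda>u. p (a # u)) (ncmul q r) w"
      by (simp only: ncmul_Cons[of "ncmul p q"] ncmul_Nil ncmul_Cons_left ncmul_add_left
          ncmul_scale_left plus_fun_apply ncscale_apply Cons.IH) (simp add: algebra_simps)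
    also have "\<dots> = ncmul p (ncmul q r) (a # w)"
      by (simp only: ncmul_Cons[of p "ncmul q r"] ncmul_Cons[of q r]) (simp add: algebra_simps)
    finally show ?case .
  qed simp
qed

lemma lie_br_eq: "lie_br a b = ncmul a b - ncmul b a"
  by (simp add: lie_br_def fun_eq_iff)

lemma lie_br_add_left [simp]: "lie_br (a + b) c = lie_br a c + lie_br b c"
  and lie_br_add_right [simp]: "lie_br a (b + c) = lie_br a b + lie_br a c"
  and lie_br_scale_left [simp]: "lie_br (ncscale r a) b = ncscale r (lie_br a b)"
  and lie_br_scale_right [simp]: "lie_br a (ncscale r b) = ncscale r (lie_br a b)"
  and lie_br_minus_left [simp]: "lie_br (- a) b = - lie_br a b"
  and lie_br_minus_right [simp]: "lie_br a (- b) = - lie_br a b"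
  and lie_br_zero_left [simp]: "lie_br 0 b = 0"
  and lie_br_zero_right [simp]: "lie_br a 0 = 0"
  and lie_br_self [simp]: "lie_br a a = 0"
  by (simp_all add: lie_br_eq fun_eq_iff algebra_simps)

lemma lie_br_antisym: "lie_br a b = - lie_br b a"
  by (simp add: lie_br_eq)

lemma lie_br_jacobi: "lie_br (lie_br a b) c = lie_br (lie_br a c) b + lie_br a (lie_br b c)"
  by (simp add: lie_br_eq ncmul_assoc algebra_simps)

lemma nc_linear_lie_br_left: "nc_linear (\<lambda>a. lie_br a b)"
  and nc_linear_lie_br_right: "nc_linear (lie_br a)"
  by (simp_all add: nc_linearI)

lemma lie_br_span_left:
  assumes "a \<in> nc.span A" and "\<And>s. s \<in> A \<Longrightarrow> lie_br s b \<in> nc.span C"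
  shows "lie_br a b \<in> nc.span C"
  using nc_linear_span_into[OF nc_linear_lie_br_left[of b] assms] by simp

lemma lie_br_span:
  assumes "a \<in> nc.span A" and "b \<in> nc.span B"
    and "\<And>s t. s \<in> A \<Longrightarrow> t \<in> B \<Longrightarrow> lie_br s t \<in> nc.span C"
  shows "lie_br a b \<in> nc.span C"
proof -
  have "lie_br s b \<in> nc.span C" if "s \<in> A" for s
    using nc_linear_span_into[OF nc_linear_lie_br_right[of s] assms(2)] assms(3)[OF that] by blast
  then show ?thesis
    using nc_linear_span_into[OF nc_linear_lie_br_left[of b] assms(1)] by blast
qed

lemma delta_Cons: "delta p (a # w) = (if a = X then p (Y # w) else 0) + delta (\<lambda>u. p (a # u)) w"
proof -
  have positions: "{i. i < length (a # w) \<and> (a # w) ! i = X} =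
      (if a = X then {0} else {}) \<union> Suc ` {i. i < length w \<and> w ! i = X}"
    by (rule set_eqI, case_tac x) (auto simp: inj_image_mem_iff)
  show ?thesis
    unfolding delta_def positions by (subst sum.union_disjoint) (auto simp: sum.reindex)
qed

lemma delta_add [simp]: "delta (a + b) = delta a + delta b"
  and delta_scale [simp]: "delta (ncscale c a) = ncscale c (delta a)"
  by (simp_all add: delta_def fun_eq_iff sum.distrib sum_distrib_left ncscale_apply)

lemma nc_linear_delta: "nc_linear delta"
  by (simp add: nc_linearI)

lemma delta_minus [simp]: "delta (- a) = - delta a"
  and delta_diff [simp]: "delta (a - b) = delta a - delta b"
  and delta_zero [simp]: "delta 0 = 0"
  using module_hom.neg[OF nc_linear_delta] module_hom.diff[OF nc_linear_delta]
    module_hom.zero[OF nc_linear_delta] by blast+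

lemma delta_Nil [simp]: "delta p [] = 0"
  by (simp add: delta_def)

lemma delta_ncmul: "delta (ncmul p q) = ncmul (delta p) q + ncmul p (delta q)"
proof (rule ext)
  show "delta (ncmul p q) w = (ncmul (delta p) q + ncmul p (delta q)) w" for w
  proof (induction w arbitrary: p)
    case (Cons a w)
    have tail: "delta (\<lambda>u. ncmul p q (a # u)) w = p [] * delta (\<lambda>u. q (a # u)) w
        + ncmul (delta (\<lambda>u. p (a # u))) q w + ncmul (\<lambda>u. p (a # u)) (delta q) w"
      by (simp only: ncmul_Cons_left delta_add delta_scale plus_fun_apply ncscale_apply Cons.IH)
        (simp add: algebra_simps)
    have "(\<lambda>u. delta p (a # u)) = (if a = X then (\<lambda>u. p (Y # u)) else 0) + delta (\<lambda>u. p (a # u))"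
      by (simp add: fun_eq_iff delta_Cons)
    then have head: "ncmul (delta p) q (a # w)
        = (if a = X then ncmul (\<lambda>u. p (Y # u)) q w else 0) + ncmul (delta (\<lambda>u. p (a # u))) q w"
      by (simp add: ncmul_Cons[of "delta p"])
    show ?case
      using tail head by (simp add: delta_Cons[of "ncmul p q"] ncmul_Cons[of p q]
          ncmul_Cons[of p "delta q"] delta_Cons[of q] algebra_simps)
  qed simp
qed

lemma delta_lie_br: "delta (lie_br a b) = lie_br (delta a) b + lie_br a (delta b)"
  by (simp add: lie_br_eq delta_ncmul)

lemma delta_gen_el: "delta (gen_el g) = (if g = Y then xel else 0)"
proof (rule ext)
  fix w :: "gen list"
  have updated: "gen_el g (w[i := Y]) = (if g = Y \<and> w = [X] then 1 else 0)"
    if "i < length w" "w ! i = X" for i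
    using that by (cases w) (auto simp: gen_el_def split: nat.splits)
  show "delta (gen_el g) w = (if g = Y then xel else 0) w"
  proof (cases "w = [X]")
    case True
    then have "{i. i < length w \<and> w ! i = X} = {0}"
      by auto
    then show ?thesis
      using True by (simp add: delta_def gen_el_def)
  next
    case False
    have lhs: "delta (gen_el g) w = 0"
      unfolding delta_def using updated False by (intro sum.neutral) auto
    have rhs: "(if g = Y then xel else 0) w = 0"
      using False by (simp add: gen_el_def)
    show ?thesis
      by (simp only: lhs rhs)
  qed
qed

lemma delta_xel [simp]: "delta xel = 0"
  and delta_yel [simp]: "delta yel = xel"
  by (simp_all add: delta_gen_el)

lemma cnt_Nil [simp]: "cnt g [] = 0"
  and cnt_Cons [simp]: "cnt g (a # w) = (if a = g then Suc (cnt g w) else cnt g w)"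
  and cnt_append [simp]: "cnt g (u @ v) = cnt g u + cnt g v"
  by (simp_all add: cnt_def)

lemma ncmul_nonzero_split:
  assumes "ncmul p q w \<noteq> 0"
  obtains i where "p (take i w) \<noteq> 0" and "q (drop i w) \<noteq> 0"
proof -
  obtain i where "p (take i w) * q (drop i w) \<noteq> 0"
    using assms unfolding ncmul_def by (meson sum.not_neutral_contains_not_neutral)
  then have "p (take i w) \<noteq> 0" and "q (drop i w) \<noteq> 0"
    by auto
  then show thesis
    by (rule that)
qed

lemma lie_br_nonzero:
  assumes "lie_br p q w \<noteq> 0"
  shows "ncmul p q w \<noteq> 0 \<or> ncmul q p w \<noteq> 0"
  using assms by (auto simp: lie_br_def)

lemma ncmul_additive_weight:
  fixes \<phi> :: "gen list \<Rightarrow> nat"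
  assumes "\<And>u v. \<phi> (u @ v) = \<phi> u + \<phi> v"
    and "\<forall>u. p u \<noteq> 0 \<longrightarrow> \<phi> u = a" and "\<forall>u. q u \<noteq> 0 \<longrightarrow> \<phi> u = b"
  shows "\<forall>w. ncmul p q w \<noteq> 0 \<longrightarrow> \<phi> w = a + b"
proof (intro allI impI)
  fix w
  assume "ncmul p q w \<noteq> 0"
  then obtain i where "p (take i w) \<noteq> 0" and "q (drop i w) \<noteq> 0"
    by (rule ncmul_nonzero_split)
  then have "\<phi> (take i w) = a" and "\<phi> (drop i w) = b"
    using assms(2,3) by blast+
  moreover have "\<phi> w = \<phi> (take i w) + \<phi> (drop i w)"
    using assms(1)[of "take i w" "drop i w"] by simp
  ultimately show "\<phi> w = a + b"
    by simp
qed

lemma lie_br_additive_weight: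
  fixes \<phi> :: "gen list \<Rightarrow> nat"
  assumes "\<And>u v. \<phi> (u @ v) = \<phi> u + \<phi> v"
    and "\<forall>u. p u \<noteq> 0 \<longrightarrow> \<phi> u = a" and "\<forall>u. q u \<noteq> 0 \<longrightarrow> \<phi> u = b"
  shows "\<forall>w. lie_br p q w \<noteq> 0 \<longrightarrow> \<phi> w = a + b"
  using lie_br_nonzero ncmul_additive_weight[of \<phi> p a q b, OF assms(1-3)]
    ncmul_additive_weight[of \<phi> q b p a, OF assms(1,3,2)] by (metis add.commute)

lemma deg_is_lie_br: "deg_is p a \<Longrightarrow> deg_is q b \<Longrightarrow> deg_is (lie_br p q) (a + b)"
  unfolding deg_is_def by (rule lie_br_additive_weight[OF length_append])

lemma deg_y_is_lie_br: "deg_y_is p a \<Longrightarrow> deg_y_is q b \<Longrightarrow> deg_y_is (lie_br p q) (a + b)"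
  unfolding deg_y_is_def by (rule lie_br_additive_weight[OF cnt_append])

lemma ncmul_deg_is_left:
  assumes "deg_is p d"
  shows "ncmul p q w = (if d \<le> length w then p (take d w) * q (drop d w) else 0)"
proof -
  have "p (take i w) * q (drop i w) = (if i = d then p (take d w) * q (drop d w) else 0)"
    if "i \<le> length w" for i
  proof (cases "i = d")
    case False
    have "length (take i w) = i"
      using that by simp
    then have "p (take i w) = 0"
      using assms False unfolding deg_is_def by metis
    then show ?thesis
      using False by simp
  qed simp
  then have "ncmul p q w = (\<Sum>i\<le>length w. if i = d then p (take d w) * q (drop d w) else 0)"
    unfolding ncmul_def by (intro sum.cong) simp_all
  then show ?thesis
    by (simp add: sum.delta)
qed

lemma deg_is_gen_el: "deg_is (gen_el g) 1"
  by (simp add: deg_is_def gen_el_def)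

lemma deg_y_is_gen_el: "deg_y_is (gen_el g) (if g = Y then 1 else 0)"
  by (cases g) (simp_all add: deg_y_is_def gen_el_def)

definition ys :: "nat \<Rightarrow> 'k::comm_ring_1 ncs" where
  "ys i = lnb yel (replicate i xel)"

lemma lnb_Nil [simp]: "lnb a [] = a"
  and lnb_snoc: "lnb a (bs @ [b]) = lie_br (lnb a bs) b"
  by (simp_all add: lnb_def)

lemma ys_0 [simp]: "ys 0 = yel"
  by (simp add: ys_def)

lemma ys_Suc: "ys (Suc i) = lie_br (ys i) xel"
  by (simp add: ys_def lnb_snoc flip: replicate_append_same)

lemma deg_is_ys: "deg_is (ys i) (Suc i)"
proof (induction i)
  case 0
  show ?case using deg_is_gen_el by simp
next
  case (Suc i)
  show ?case using deg_is_lie_br[OF Suc.IH deg_is_gen_el] by (simp add: ys_Suc)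
qed

lemma deg_y_is_ys: "deg_y_is (ys i) 1"
proof (induction i)
  case 0
  show ?case using deg_y_is_gen_el[of Y] by simp
next
  case (Suc i)
  show ?case using deg_y_is_lie_br[OF Suc.IH deg_y_is_gen_el[of X]] by (simp add: ys_Suc)
qed

lemma ys_Y_replicate: "(ys i :: 'k::comm_ring_1 ncs) (Y # replicate b X) = (if b = i then 1 else 0)"
proof (cases "b = i")
  case True
  then show ?thesis
  proof (induction i arbitrary: b)
    case (Suc i)
    have "(xel :: 'k ncs) [Y] = 0" and "(xel :: 'k ncs) [X] = 1"
      by (simp_all add: gen_el_def)
    then show ?case
      using Suc by (simp add: ys_Suc lie_br_def ncmul_deg_is_left[OF deg_is_ys]
          ncmul_deg_is_left[OF deg_is_gen_el] flip: replicate_append_same)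
  qed (simp add: gen_el_def)
next
  case False
  then show ?thesis
    using deg_is_ys[of i] by (auto simp: deg_is_def)
qed

lemma ncmul_ys_Y_prefix:
  assumes "a \<le> c"
  shows "ncmul (ys c :: 'k::comm_ring_1 ncs) q (Y # replicate a X @ Y # v) = (if c = a then q (Y # v) else 0)"
proof (cases "c = a")
  case True
  then show ?thesis
    by (simp add: ncmul_deg_is_left[OF deg_is_ys] ys_Y_replicate)
next
  case False
  then have "c - a = Suc (c - Suc a)"
    using assms by simp
  then have "take (Suc c) (Y # replicate a X @ Y # v) = Y # replicate a X @ Y # take (c - Suc a) v"
    using assms by simp
  then have "(ys c :: 'k ncs) (take (Suc c) (Y # replicate a X @ Y # v)) = 0"
    using deg_y_is_ys[of c] by (auto simp: deg_y_is_def)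
  then show ?thesis
    using False by (simp add: ncmul_deg_is_left[OF deg_is_ys])
qed

lemma lie_br_ys_ys_word:
  assumes "a \<le> c" and "a < d"
  shows "lie_br (ys c) (ys d) (Y # replicate a X @ Y # replicate b X) = (if c = a \<and> d = b then 1 else 0)"
  using assms by (simp add: lie_br_def ncmul_ys_Y_prefix ys_Y_replicate)

lemma delta_ys: "delta (ys i :: 'k::comm_ring_1 ncs) = (if i = 0 then xel else 0)"
proof (induction i)
  case (Suc i)
  show ?case
    by (simp add: ys_Suc delta_lie_br Suc.IH)
qed simp

section \<open>The y-degree components of the free Lie algebra\<close>

definition y_part :: "nat \<Rightarrow> 'k::comm_ring_1 ncs \<Rightarrow> 'k ncs" where
  "y_part d f = (\<lambda>w. if cnt Y w = d then f w else 0)"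

lemma nc_linear_y_part: "nc_linear (y_part d)"
  by (rule nc_linearI) (simp_all add: y_part_def fun_eq_iff ncscale_apply)

lemma y_part_deg_y_is: "deg_y_is f e \<Longrightarrow> y_part d f = (if d = e then f else 0)"
  by (auto simp: y_part_def deg_y_is_def fun_eq_iff)

lemma y_part_ncmul: "y_part d (ncmul p q) = (\<Sum>e\<le>d. ncmul (y_part e p) (y_part (d - e) q))"
proof (rule ext)
  fix w :: "gen list"
  have split_count: "cnt Y (take i w) + cnt Y (drop i w) = cnt Y w" for i
    by (metis append_take_drop_id cnt_append)
  have "(\<Sum>e\<le>d. (if cnt Y u = e then p u else 0) * (if cnt Y v = d - e then q v else 0))
      = (if cnt Y u + cnt Y v = d then p u * q v else 0)" for u v
    by (auto simp: if_distrib[of "\<lambda>x. x * _"] cong: if_cong)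
  then have "(\<Sum>e\<le>d. ncmul (y_part e p) (y_part (d - e) q) w)
      = (\<Sum>i\<le>length w. if cnt Y w = d then p (take i w) * q (drop i w) else 0)"
    unfolding ncmul_def y_part_def by (subst sum.swap) (simp add: split_count)
  then show "y_part d (ncmul p q) w = (\<Sum>e\<le>d. ncmul (y_part e p) (y_part (d - e) q)) w"
    by (simp add: sum_fun_apply y_part_def ncmul_def)
qed

lemma y_part_lie_br: "y_part d (lie_br p q) = (\<Sum>e\<le>d. lie_br (y_part e p) (y_part (d - e) q))"
proof -
  have "(\<Sum>e\<le>d. ncmul (y_part e q) (y_part (d - e) p)) = (\<Sum>e\<le>d. ncmul (y_part (d - e) q) (y_part e p))"
    by (rule sum.reindex_bij_witness[where i="\<lambda>e. d - e" and j="\<lambda>e. d - e"]) auto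
  then show ?thesis
    by (simp add: lie_br_eq y_part_ncmul module_hom.diff[OF nc_linear_y_part] sum_subtractf)
qed

fun ybrackets :: "nat \<Rightarrow> 'k::comm_ring_1 ncs set" where
  "ybrackets 0 = {xel}"
| "ybrackets (Suc d) = {lnb (ys i) (map ys ks) | i ks. length ks = d}"

lemma ybrackets_Suc_0 [simp]: "ybrackets (Suc 0) = range ys"
  by auto

lemma lie_br_ybrackets_ys:
  assumes "s \<in> ybrackets d"
  shows "lie_br s (ys k) \<in> nc.span (ybrackets (Suc d))"
proof (cases d)
  case 0
  then have bracket: "lie_br s (ys k) = - ys (Suc k)"
    using assms by (simp add: ys_Suc lie_br_antisym[of xel])
  show ?thesis
    unfolding bracket 0 by (intro nc.span_neg nc.span_base) auto
next
  case (Suc d')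
  then obtain i ks where "s = lnb (ys i) (map ys ks)" and "length ks = d'"
    using assms by auto
  then have "lie_br s (ys k) = lnb (ys i) (map ys (ks @ [k]))" and "length (ks @ [k]) = d"
    using Suc by (simp_all add: lnb_snoc)
  then show ?thesis
    by (intro nc.span_base) (auto simp del: map_append intro!: exI[of _ i] exI[of _ "ks @ [k]"])
qed

lemma lie_br_ybrackets_xel:
  assumes "(s :: 'k::comm_ring_1 ncs) \<in> ybrackets d"
  shows "lie_br s xel \<in> nc.span (ybrackets d)"
proof (cases d)
  case 0
  then show ?thesis
    using assms by (simp add: nc.span_zero)
next
  case (Suc d')
  then obtain i ks where s: "s = lnb (ys i) (map ys ks)" and "length ks = d'"
    using assms by auto
  have "lie_br (lnb (ys i) (map ys ks)) xel \<in> nc.span (ybrackets (Suc (length ks)) :: 'k ncs set)"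
  proof (induction ks rule: rev_induct)
    case Nil
    show ?case
      by (rule nc.span_base) (auto simp: ys_Suc[symmetric])
  next
    case (snoc k ks)
    let ?s = "lnb (ys i) (map ys ks) :: 'k ncs"
    have jacobi: "lie_br (lnb (ys i) (map ys (ks @ [k]))) xel
        = lie_br (lie_br ?s xel) (ys k) + lie_br ?s (ys (Suc k))"
      by (simp only: lnb_snoc map_append list.map lie_br_jacobi[of ?s "ys k" xel] ys_Suc)
    have "lie_br (lie_br ?s xel) (ys k) \<in> nc.span (ybrackets (Suc (Suc (length ks))))"
      by (rule lie_br_span_left[OF snoc.IH lie_br_ybrackets_ys])
    moreover have "lie_br ?s (ys (Suc k)) \<in> nc.span (ybrackets (Suc (Suc (length ks))))"
      by (rule lie_br_ybrackets_ys) auto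
    ultimately show ?case
      unfolding jacobi by (simp only: length_append_singleton nc.span_add)
  qed
  then show ?thesis
    using s Suc \<open>length ks = d'\<close> by simp
qed

lemma lie_br_ybrackets:
  assumes "(s :: 'k::comm_ring_1 ncs) \<in> ybrackets a" and "t \<in> ybrackets b"
  shows "lie_br s t \<in> nc.span (ybrackets (a + b))"
proof (cases b)
  case 0
  then show ?thesis
    using assms lie_br_ybrackets_xel by auto
next
  case (Suc b')
  then obtain k ks where t: "t = lnb (ys k) (map ys ks)" and "length ks = b'"
    using assms(2) by auto
  have "lie_br s (lnb (ys k) (map ys ks)) \<in> nc.span (ybrackets (a + Suc (length ks)))"
    if "(s :: 'k ncs) \<in> ybrackets a" for s a
    using that
  proof (induction ks arbitrary: s a rule: rev_induct)
    case Nil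
    then show ?case
      using lie_br_ybrackets_ys by simp
  next
    case (snoc k' ks)
    let ?t = "lnb (ys k) (map ys ks) :: 'k ncs"
    have jacobi: "lie_br s (lnb (ys k) (map ys (ks @ [k'])))
        = lie_br (lie_br s ?t) (ys k') - lie_br (lie_br s (ys k')) ?t"
      using lie_br_jacobi[of s ?t "ys k'"] by (simp add: lnb_snoc)
    have "lie_br (lie_br s ?t) (ys k') \<in> nc.span (ybrackets (Suc (a + Suc (length ks))))"
      by (rule lie_br_span_left[OF snoc.IH[OF snoc.prems] lie_br_ybrackets_ys])
    moreover have "lie_br (lie_br s (ys k')) ?t \<in> nc.span (ybrackets (Suc a + Suc (length ks)))"
      by (rule lie_br_span_left[OF lie_br_ybrackets_ys[OF snoc.prems]], rule snoc.IH)
    moreover have "Suc a + Suc (length ks) = a + Suc (length (ks @ [k']))"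
      and "Suc (a + Suc (length ks)) = a + Suc (length (ks @ [k']))"
      by simp_all
    ultimately show ?case
      unfolding jacobi by (metis nc.span_diff)
  qed
  then show ?thesis
    using assms(1) t Suc \<open>length ks = b'\<close> by simp
qed

lemma y_part_xel: "y_part d (xel :: 'k::comm_ring_1 ncs) \<in> nc.span (ybrackets d)"
  by (cases "d = 0") (simp_all add: y_part_deg_y_is[OF deg_y_is_gen_el] nc.span_zero nc.span_base)

lemma y_part_yel: "y_part d (yel :: 'k::comm_ring_1 ncs) \<in> nc.span (ybrackets d)"
proof (cases "d = 1")
  case True
  have "(yel :: 'k ncs) \<in> ybrackets 1"
    unfolding One_nat_def ybrackets_Suc_0 by (rule range_eqI[of _ _ 0]) simp
  then show ?thesis
    using True by (simp add: y_part_deg_y_is[OF deg_y_is_gen_el] nc.span_base)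
next
  case False
  then show ?thesis
    by (simp add: y_part_deg_y_is[OF deg_y_is_gen_el] nc.span_zero)
qed

theorem y_part_free_lie:
  assumes "lie_gen {xel, yel} (f :: 'k::comm_ring_1 ncs)"
  shows "y_part d f \<in> nc.span (ybrackets d)"
  using assms
proof (induction arbitrary: d rule: lie_gen.induct)
  case (base s)
  then show ?case
    using y_part_xel y_part_yel by auto
next
  case zero
  show ?case
    unfolding ncs_pointwise_eqs module_hom.zero[OF nc_linear_y_part] by (rule nc.span_zero)
next
  case (add a b)
  show ?case
    unfolding ncs_pointwise_eqs module_hom.add[OF nc_linear_y_part] by (rule nc.span_add[OF add.IH])
next
  case (smult a c)
  show ?case
    unfolding ncs_pointwise_eqs module_hom.scale[OF nc_linear_y_part] by (rule nc.span_scale[OF smult.IH])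
next
  case (br a b)
  have "lie_br (y_part e a) (y_part (d - e) b) \<in> nc.span (ybrackets d :: 'k ncs set)" if "e \<le> d" for e
  proof (rule lie_br_span[OF br.IH(1) br.IH(2)])
    show "lie_br s t \<in> nc.span (ybrackets d)" if "s \<in> ybrackets e" and "t \<in> ybrackets (d - e)" for s t
      using lie_br_ybrackets[OF that] \<open>e \<le> d\<close> by simp
  qed
  then show ?case
    unfolding y_part_lie_br by (intro nc.span_sum) simp
qed

definition br3 :: "nat \<Rightarrow> nat \<Rightarrow> nat \<Rightarrow> 'k::comm_ring_1 ncs" where
  "br3 i j k = lie_br (lie_br (ys i) (ys j)) (ys k)"

lemma ybrackets_3: "ybrackets 3 = {br3 i j k :: 'k::comm_ring_1 ncs | i j k. True}"
proof (intro set_eqI iffI)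
  fix t :: "'k ncs"
  assume "t \<in> ybrackets 3"
  then obtain i ks where t: "t = lnb (ys i) (map ys ks)" and "length ks = 2"
    by (auto simp: numeral_3_eq_3)
  then obtain j k where "ks = [j, k]"
    by (auto simp: numeral_2_eq_2 length_Suc_conv)
  then show "t \<in> {br3 i j k | i j k. True}"
    using t by (auto simp: br3_def lnb_def)
next
  fix t :: "'k ncs"
  assume "t \<in> {br3 i j k | i j k. True}"
  then obtain i j k where "t = lnb (ys i) (map ys [j, k])"
    by (auto simp: br3_def lnb_def)
  then show "t \<in> ybrackets 3"
    unfolding numeral_3_eq_3 ybrackets.simps by (intro CollectI exI[of _ i] exI[of _ "[j, k]"]) simp
qed

definition deg_part :: "nat \<Rightarrow> 'k::comm_ring_1 ncs \<Rightarrow> 'k ncs" where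
  "deg_part n f = (\<lambda>w. if length w = n then f w else 0)"

lemma nc_linear_deg_part: "nc_linear (deg_part n)"
  by (rule nc_linearI) (simp_all add: deg_part_def fun_eq_iff ncscale_apply)

lemma deg_part_deg_is: "deg_is f e \<Longrightarrow> deg_part n f = (if n = e then f else 0)"
  by (auto simp: deg_part_def deg_is_def fun_eq_iff)

lemma deg_is_br3: "deg_is (br3 i j k :: 'k::comm_ring_1 ncs) (i + j + k + 3)"
proof -
  have "deg_is (br3 i j k :: 'k ncs) (Suc i + Suc j + Suc k)"
    unfolding br3_def by (intro deg_is_lie_br deg_is_ys)
  then show ?thesis
    by (simp add: numeral_3_eq_3)
qed

lemma free_lie_deg_y_3_span:
  fixes f :: "'k::comm_ring_1 ncs"
  assumes "f \<in> free_lie" and "deg_y_is f 3" and "deg_is f (m + 3)"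
  shows "f \<in> nc.span {br3 i j k | i j k. i + j + k = m}"
proof -
  have "f \<in> nc.span (ybrackets 3)"
    using y_part_free_lie[of f 3] assms(1,2) by (simp add: free_lie_def y_part_deg_y_is)
  then have "deg_part (m + 3) f \<in> nc.span {br3 i j k | i j k. i + j + k = m}"
    unfolding ybrackets_3
  proof (rule nc_linear_span_into[OF nc_linear_deg_part])
    fix t :: "'k ncs"
    assume "t \<in> {br3 i j k | i j k. True}"
    then obtain i j k where t: "t = br3 i j k"
      by blast
    show "deg_part (m + 3) t \<in> nc.span {br3 i j k | i j k. i + j + k = m}"
    proof (cases "i + j + k = m")
      case True
      then show ?thesis
        by (simp add: t deg_part_deg_is[OF deg_is_br3]) (blast intro: nc.span_base)
    next
      case False
      then show ?thesis
        by (simp add: t deg_part_deg_is[OF deg_is_br3] nc.span_zero)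
    qed
  qed
  then show ?thesis
    using assms(3) by (simp add: deg_part_deg_is)
qed

definition br3y :: "nat \<Rightarrow> nat \<Rightarrow> 'k::comm_ring_1 ncs" where
  "br3y m j = br3 0 j (m - j)"

definition br3_pos :: "nat \<Rightarrow> 'k::comm_ring_1 ncs set" where
  "br3_pos m = {br3 i j k | i j k. 0 < i \<and> 0 < j \<and> 0 < k \<and> i + j + k = m}"

lemma br3_first_zero: "br3 0 j k = (br3y (j + k) j :: 'k::comm_ring_1 ncs)"
  by (simp add: br3y_def)

lemma br3_middle_zero: "br3 i 0 k = - (br3y (i + k) i :: 'k::comm_ring_1 ncs)"
  by (simp add: br3y_def br3_def lie_br_antisym[of "ys i"])

lemma br3_last_zero: "br3 i j 0 = br3y (i + j) j - (br3y (i + j) i :: 'k::comm_ring_1 ncs)"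
proof -
  have "br3 i j 0 = lie_br (lie_br (ys i) yel) (ys j) + lie_br (ys i) (lie_br (ys j) yel :: 'k ncs)"
    using lie_br_jacobi[of "ys i" "ys j" yel] by (simp add: br3_def)
  then show ?thesis
    by (simp add: br3y_def br3_def lie_br_antisym[of "ys i" yel]
        lie_br_antisym[of "ys i" "lie_br yel (ys j)"] lie_br_antisym[of "ys j" yel])
qed

lemma br3_in_span_br3_pos_br3y:
  assumes "i + j + k = m"
  shows "(br3 i j k :: 'k::comm_ring_1 ncs) \<in> nc.span (br3_pos m \<union> br3y m ` {..m})"
    (is "_ \<in> nc.span ?S")
proof -
  have base: "br3y m i \<in> nc.span ?S" "br3y m j \<in> nc.span ?S"
    using assms by (auto intro: nc.span_base)
  consider "i = 0" | "0 < i" "j = 0" | "0 < i" "0 < j" "k = 0" | "0 < i" "0 < j" "0 < k"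
    by auto
  then show ?thesis
  proof cases
    case 1
    then show ?thesis
      using base assms by (simp add: br3_first_zero)
  next
    case 2
    then show ?thesis
      using base assms by (simp add: br3_middle_zero nc.span_neg)
  next
    case 3
    then show ?thesis
      using base assms by (simp add: br3_last_zero nc.span_diff)
  next
    case 4
    then show ?thesis
      using assms by (intro nc.span_base) (auto simp: br3_pos_def)
  qed
qed

lemma wel_eq_br3y:
  assumes "0 < k" and "k \<le> m"
  shows "wel (m + 3) k = br3y m (m - k) + (br3y m (k - 1) :: 'k::comm_ring_1 ncs)"
proof -
  have indices: "m + 3 - 3 - k = m - k" "m + 3 - 2 - k = m - (k - 1)" "m - (m - k) = k"
    using assms by auto
  have "wel (m + 3) k = lie_br (ys k) (lie_br (ys (m - k)) (ys 0))
      - lie_br (lie_br (ys (k - 1)) (ys 0)) (ys (m - (k - 1)) :: 'k ncs)"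
    unfolding wel_def indices by (simp add: lnb_def ys_def fun_eq_iff)
  also have "\<dots> = br3y m (m - k) + br3y m (k - 1)"
    using assms
    by (simp add: br3y_def br3_def indices lie_br_antisym[of "ys k"] lie_br_antisym[of "ys (m - k)"]
        lie_br_antisym[of "ys (k - Suc 0)" yel])
  finally show ?thesis .
qed

definition wel_gens :: "nat \<Rightarrow> 'k::comm_ring_1 ncs set" where
  "wel_gens n = {wel n k | k. int n - 2 \<le> 2 * int k \<and> k + 4 \<le> n}"

lemma gens_cor_eq: "gens_cor n = {xel, lie_br yel xel} \<union> wel_gens n"
  by (simp add: gens_cor_def wel_gens_def)

definition upper_half :: "nat \<Rightarrow> nat set" where
  "upper_half m = {j. 0 < j \<and> m \<le> 2 * j \<and> j \<le> m}"

text \<open>By \<open>wel_eq_br3y\<close>, modulo the generators \<open>br3y m j\<close> is congruent to \<open>- br3y m (m - 1 - j)\<close>;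
  at the fixed point 2 j = m - 1 this needs the factor 1/2.\<close>

lemma br3y_in_span:
  assumes "j \<le> m"
  shows "(br3y m j :: 'k::field_char_0 ncs)
    \<in> nc.span (br3_pos m \<union> wel_gens (m + 3) \<union> br3y m ` upper_half m)"
    (is "_ \<in> nc.span ?S")
proof -
  consider "j = 0" | "j \<in> upper_half m" | "0 < j" "2 * j < m - 1" | "0 < j" "2 * j = m - 1"
    using assms by (fastforce simp: upper_half_def)
  then show ?thesis
  proof cases
    case 1
    then show ?thesis
      by (simp add: br3y_def br3_def nc.span_zero)
  next
    case 2
    then show ?thesis
      by (auto intro: nc.span_base)
  next
    case 3
    have "wel (m + 3) (m - j) = br3y m j + (br3y m (m - 1 - j) :: 'k ncs)"
      using 3 by (subst wel_eq_br3y) auto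
    moreover have "wel (m + 3) (m - j) \<in> ?S" and "br3y m (m - 1 - j) \<in> ?S"
      using 3 by (auto simp: wel_gens_def upper_half_def)
    ultimately show ?thesis
      by (metis add_diff_cancel_right' nc.span_base nc.span_diff)
  next
    case 4
    then have "m - Suc j = j"
      by simp
    then have "wel (m + 3) (m - j) = br3y m j + (br3y m j :: 'k ncs)"
      using 4 by (subst wel_eq_br3y) auto
    then have "br3y m j = ncscale (1 / 2) (wel (m + 3) (m - j) :: 'k ncs)"
      by (simp add: fun_eq_iff ncscale_apply)
    moreover have "wel (m + 3) (m - j) \<in> ?S"
      using 4 by (auto simp: wel_gens_def)
    ultimately show ?thesis
      by (simp add: nc.span_base nc.span_scale)
  qed
qed

section \<open>The kernel of delta in y-degree three\<close>

lemma lie_br_xel_ys: "lie_br xel (ys j) = - ys (Suc j)"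
  by (simp add: ys_Suc lie_br_antisym[of xel])

lemma delta_br3y:
  assumes "0 < j" and "j < m"
  shows "delta (br3y m j :: 'k::comm_ring_1 ncs) = lie_br (ys (m - j)) (ys (Suc j))"
  using assms
  by (simp add: br3y_def br3_def delta_lie_br delta_ys lie_br_xel_ys lie_br_antisym[of "ys (Suc j)"])

lemma delta_br3y_top:
  assumes "0 < m"
  shows "delta (br3y m m :: 'k::comm_ring_1 ncs)
    = lie_br (ys 0) (ys (Suc m)) + lie_br (ys 0) (ys (Suc m)) + lie_br (ys 1) (ys m)"
proof -
  have "delta (br3y m m :: 'k ncs) = lie_br (lie_br xel (ys m)) (ys 0) + lie_br (lie_br (ys 0) (ys m)) xel"
    using assms by (simp add: br3y_def br3_def delta_lie_br delta_ys)
  also have "lie_br (lie_br xel (ys m)) (ys 0) = lie_br (ys 0) (ys (Suc m) :: 'k ncs)"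
    by (simp add: lie_br_xel_ys lie_br_antisym[of "ys (Suc m)"])
  also have "lie_br (lie_br (ys 0) (ys m)) xel = lie_br (ys 1) (ys m) + lie_br (ys 0) (ys (Suc m) :: 'k ncs)"
    using lie_br_jacobi[of "ys 0" "ys m" xel] by (simp add: ys_Suc)
  finally show ?thesis
    by (simp only: ac_simps)
qed

lemma delta_br3y_word:
  assumes "j \<in> upper_half m" and "a \<le> m - j"
  shows "delta (br3y m j :: 'k::comm_ring_1 ncs) (Y # replicate a X @ Y # replicate (Suc m - a) X)
    = (if a = m - j then if j = m then 2 else 1 else 0)"
    (is "delta _ ?w = _")
proof (cases "j = m")
  case True
  then have "a = 0" and "0 < m"
    using assms by (auto simp: upper_half_def)
  have "(lie_br (ys 0) (ys (Suc m)) :: 'k ncs) ?w = 1"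
    by (subst lie_br_ys_ys_word) (use \<open>a = 0\<close> in auto)
  moreover have "(lie_br (ys 1) (ys m) :: 'k ncs) ?w = 0"
    by (subst lie_br_ys_ys_word) (use \<open>a = 0\<close> \<open>0 < m\<close> in auto)
  ultimately show ?thesis
    using True \<open>a = 0\<close> by (simp only: delta_br3y_top[OF \<open>0 < m\<close>] plus_fun_apply) simp
next
  case False
  then have "0 < j" "j < m" "a < Suc j"
    using assms by (auto simp: upper_half_def)
  then have "(lie_br (ys (m - j)) (ys (Suc j)) :: 'k ncs) ?w = (if a = m - j then 1 else 0)"
    using assms(2) by (subst lie_br_ys_ys_word) auto
  then show ?thesis
    using False by (simp only: delta_br3y[OF \<open>0 < j\<close> \<open>j < m\<close>]) simp
qed

lemma finite_upper_half: "finite (upper_half m)"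
  by (rule finite_subset[of _ "{..m}"]) (auto simp: upper_half_def)

text \<open>Take j0 maximal with a nonzero coefficient and evaluate at the word of a = m - j0:
  by \<open>delta_br3y_word\<close>, only the term of j0 survives.\<close>

lemma delta_br3y_independent:
  fixes c :: "nat \<Rightarrow> 'k::field_char_0"
  assumes "(\<Sum>j\<in>upper_half m. ncscale (c j) (delta (br3y m j))) = 0" and "j \<in> upper_half m"
  shows "c j = 0"
proof (rule ccontr)
  assume "c j \<noteq> 0"
  define J where "J = {j \<in> upper_half m. c j \<noteq> 0}"
  define j0 where "j0 = Max J"
  have "finite J" and "J \<noteq> {}"
    using finite_upper_half \<open>c j \<noteq> 0\<close> assms(2) by (auto simp: J_def)
  then have j0: "j0 \<in> upper_half m" "c j0 \<noteq> 0" and above: "\<And>j. j \<in> J \<Longrightarrow> j \<le> j0"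
    using Max_in[of J] Max_ge[of J] by (auto simp: j0_def J_def)
  define w where "w = Y # replicate (m - j0) X @ Y # replicate (Suc m - (m - j0)) X"
  have "c i * delta (br3y m i) w = (if i = j0 then c j0 * (if j0 = m then 2 else 1) else 0)"
    if "i \<in> upper_half m" for i
  proof (cases "c i = 0")
    case False
    then have "i \<le> j0" and "j0 \<le> m"
      using above that j0(1) by (auto simp: J_def upper_half_def)
    moreover have "(delta (br3y m i) :: 'k ncs) w = (if m - j0 = m - i then if i = m then 2 else 1 else 0)"
      unfolding w_def by (rule delta_br3y_word) (use that \<open>i \<le> j0\<close> in auto)
    ultimately show ?thesis
      by auto
  qed (use j0 in auto)
  then have "(\<Sum>i\<in>upper_half m. c i * delta (br3y m i) w) = c j0 * (if j0 = m then 2 else 1)"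
    using j0(1) finite_upper_half by (simp add: sum.delta cong: sum.cong)
  moreover have "(\<Sum>i\<in>upper_half m. c i * delta (br3y m i) w) = 0"
    using fun_cong[OF assms(1), of w] by (simp add: sum_fun_apply ncscale_apply)
  ultimately show False
    using j0(2) by (simp split: if_splits)
qed

lemma span_br3y_delta_eq_0:
  fixes h :: "'k::field_char_0 ncs"
  assumes "h \<in> nc.span (br3y m ` upper_half m)" and "delta h = 0"
  shows "h = 0"
proof -
  obtain c where h: "h = (\<Sum>j\<in>upper_half m. ncscale (c j) (br3y m j))"
    using nc.span_image_finite[OF finite_upper_half assms(1)] by blast
  have "(\<Sum>j\<in>upper_half m. ncscale (c j) (delta (br3y m j))) = 0"
    using assms(2) by (simp add: h module_hom.sum[OF nc_linear_delta])
  then have "c j = 0" if "j \<in> upper_half m" for j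
    using that by (rule delta_br3y_independent)
  then show ?thesis
    by (simp add: h)
qed

section \<open>Generators of the kernel\<close>

lemma free_lie_deg_y_3_normal_form:
  fixes f :: "'k::field_char_0 ncs"
  assumes "f \<in> free_lie" and "deg_y_is f 3" and "deg_is f (m + 3)"
  shows "f \<in> nc.span (br3_pos m \<union> wel_gens (m + 3) \<union> br3y m ` upper_half m)"
proof -
  let ?N = "nc.span (br3_pos m \<union> wel_gens (m + 3) \<union> br3y m ` upper_half m) :: 'k ncs set"
  have "t \<in> ?N" if "t \<in> br3_pos m \<union> br3y m ` {..m}" for t
    using that by (auto intro: nc.span_base br3y_in_span)
  then have "br3 i j k \<in> ?N" if "i + j + k = m" for i j k
    using nc.span_subspace_induct[OF br3_in_span_br3_pos_br3y[OF that] nc.subspace_span] by blast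
  then show ?thesis
    using nc.span_subspace_induct[OF free_lie_deg_y_3_span[OF assms] nc.subspace_span] by blast
qed

lemma delta_br3_pos: "t \<in> br3_pos m \<Longrightarrow> delta t = 0"
  by (auto simp: br3_pos_def br3_def delta_lie_br delta_ys)

lemma delta_wel:
  assumes "2 \<le> k" and "k + 4 \<le> n"
  shows "delta (wel n k :: 'k::comm_ring_1 ncs) = 0"
proof -
  define m where "m = n - 3"
  have "n = m + 3"
    using assms by (simp add: m_def)
  then have "wel n k = br3y m (m - k) + (br3y m (k - 1) :: 'k ncs)"
    using assms by (simp add: wel_eq_br3y)
  moreover have "0 < m - k" "m - k < m" "0 < k - 1" "k - 1 < m"
    and "m - (m - k) = k" "m - (k - 1) = Suc (m - k)" "Suc (k - 1) = k"
    using assms by (auto simp: m_def)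
  then have "delta (br3y m (m - k) :: 'k ncs) = lie_br (ys k) (ys (Suc (m - k)))"
    and "delta (br3y m (k - 1) :: 'k ncs) = lie_br (ys (Suc (m - k))) (ys k)"
    by (simp_all add: delta_br3y)
  ultimately show ?thesis
    by (simp add: lie_br_antisym[of "ys k"])
qed

lemma delta_wel_gens: "t \<in> wel_gens n \<Longrightarrow> delta t = 0"
  by (auto simp: wel_gens_def intro!: delta_wel)

lemma delta_gens_cor: "t \<in> gens_cor n \<Longrightarrow> delta t = 0"
  by (auto simp: gens_cor_eq delta_lie_br delta_wel_gens)

lemma delta_lie_gen_gens_cor:
  assumes "lie_gen (gens_cor n) f"
  shows "delta f = 0"
  using assms
  by (induction rule: lie_gen.induct) (simp_all add: ncs_pointwise_eqs delta_gens_cor delta_lie_br)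

lemma subspace_lie_gen: "nc.subspace {f. lie_gen S f}"
  unfolding nc.subspace_def
  using lie_gen.zero[of S] lie_gen.add[of S] lie_gen.smult[of S]
  by (simp add: ncs_pointwise_eqs)

lemma lie_gen_gens_cor_ys: "0 < i \<Longrightarrow> lie_gen (gens_cor n) (ys i :: 'k::comm_ring_1 ncs)"
proof (induction i)
  case (Suc i)
  have "lie_gen (gens_cor n) (lie_br (ys i) xel :: 'k ncs)"
  proof (cases i)
    case 0
    then show ?thesis
      by (simp add: gens_cor_eq lie_gen.base)
  next
    case (Suc i')
    then have "lie_gen (gens_cor n) (ys i :: 'k ncs)"
      using Suc.IH by simp
    then show ?thesis
      by (rule lie_gen.br) (simp add: gens_cor_eq lie_gen.base)
  qed
  then show ?case
    by (simp add: ys_Suc)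
qed simp

lemma lie_gen_gens_cor_span:
  assumes "g \<in> nc.span (br3_pos m \<union> wel_gens (m + 3))"
  shows "lie_gen (gens_cor (m + 3)) g"
proof -
  have "lie_gen (gens_cor (m + 3)) t" if "t \<in> br3_pos m" for t
  proof -
    obtain i j k where t: "t = br3 i j k" and "0 < i" "0 < j" "0 < k"
      using \<open>t \<in> br3_pos m\<close> by (auto simp: br3_pos_def)
    then show ?thesis
      unfolding t br3_def by (intro lie_gen.br lie_gen_gens_cor_ys)
  qed
  moreover have "lie_gen (gens_cor (m + 3)) t" if "t \<in> wel_gens (m + 3)" for t
    using that by (simp add: gens_cor_eq lie_gen.base)
  ultimately have "lie_gen (gens_cor (m + 3)) t" if "t \<in> br3_pos m \<union> wel_gens (m + 3)" for t
    using that by blast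
  then show ?thesis
    using nc.span_subspace_induct[OF assms subspace_lie_gen] by blast
qed

theorem corollary5p6:
  fixes f :: "'k::field_char_0 ncs" and n :: nat
  assumes "f \<in> free_lie"
    and "f \<noteq> (\<lambda>w. 0)"
    and "multihom f"
    and "deg_y_is f 3"
    and "deg_is f n"
  shows "delta f = (\<lambda>w. 0) \<longleftrightarrow> lie_gen (gens_cor n) f"
proof
  assume "delta f = (\<lambda>w. 0)"
  obtain w where "f w \<noteq> 0"
    using assms(2) by auto
  then have "3 \<le> n"
    using assms(4,5) length_filter_le[of "\<lambda>c. c = Y" w] by (auto simp: deg_y_is_def deg_is_def cnt_def)
  then obtain m where n: "n = m + 3"
    using le_Suc_ex by (metis add.commute)
  then have "f \<in> nc.span ((br3_pos m \<union> wel_gens (m + 3)) \<union> br3y m ` upper_half m)"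
    using free_lie_deg_y_3_normal_form[OF assms(1,4)] assms(5) by simp
  then obtain g h where f: "f = g + h" and g: "g \<in> nc.span (br3_pos m \<union> wel_gens (m + 3))"
    and h: "h \<in> nc.span (br3y m ` upper_half m)"
    unfolding nc.span_Un[of "br3_pos m \<union> wel_gens (m + 3)"] by blast
  have "delta g = 0"
    by (rule module_hom.eq_0_on_span[OF nc_linear_delta _ g]) (auto simp: delta_br3_pos delta_wel_gens)
  then have "h = 0"
    using \<open>delta f = (\<lambda>w. 0)\<close> span_br3y_delta_eq_0[OF h] by (simp add: f ncs_pointwise_eqs)
  then show "lie_gen (gens_cor n) f"
    using lie_gen_gens_cor_span[OF g] by (simp add: f n)
next
  assume "lie_gen (gens_cor n) f"
  then show "delta f = (\<lambda>w. 0)"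
    by (simp add: delta_lie_gen_gens_cor ncs_pointwise_eqs)
qed

end
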